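(* Assume Conditions (C1) and (C2) below. Let $\lambda_m=\sup\{\lambda\in[0,1]:\widehat{\mathrm{FDR}}_m(\lambda)\le\alpha\}$, where $$\widehat{\mathrm{FDR}}_m(\lambda)=\frac{\sum_{i=1}^m\mathrm{Lfdr}_i(x_i)\mathbf I\{\mathrm{Lfdr}_i(x_i)\le\lambda\}}{\sum_{i=1}^m\mathbf I\{\mathrm{Lfdr}_i(x_i)\le\lambda\}},$$ and reject $H_i$ iff $\mathrm{Lfdr}_i(x_i)\le\lambda_m$. Then $$\limsup_{m\to\infty}\mathrm{FDR}_m(\lambda_m)\le\alpha,\qquad \mathrm{FDR}_m(\lambda)=E\Big[\frac{V_m(\lambda)}{D_{m,0}(\lambda)\vee1}\Big].$$
   Context: Setting: for $i=1,\dots,m$, $\theta_i\in\{0,1\}$ ($\theta_i=1$ iff $H_i$ is non-null), $P(\theta_i=0)=\pi_{0i}$, and the $p$-value $x_i$ given $\theta_i$ has density $(1-\theta_i)f_0+\theta_if_1$ on $[0,1]$; $f_0,f_1,\pi_{0i}$ are known. $\mathrm{Lfdr}_i(x)=\pi_{0i}f_0(x)/\{\pi_{0i}f_0(x)+(1-\pi_{0i})f_1(x)\}$. $V_m(\lambda)=\sum_{i=1}^m\mathbf I\{\mathrm{Lfdr}_i(x_i)\le\lambda\}(1-\theta_i)$, $D_{m,0}(\lambda)=\sum_{i=1}^m\mathbf I\{\mathrm{Lfdr}_i(x_i)\le\lambda\}$. $\alpha\in(0,1)$ is the target level. (C1): for every $\lambda\in[0,1]$, as $m\to\infty$, $m^{-1}D_{m,0}(\lambda)\to_p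 D_0(\lambda)$, $m^{-1}\sum_{i=1}^m\mathrm{Lfdr}_i(x_i)\mathbf I\{\mathrm{Lfdr}_i(x_i)\le\lambda\}\to_p D_1(\lambda)$, and $m^{-1}V_m(\lambda)\to_p D_1(\lambda)$, where $D_0,D_1$ are continuous functions on $[0,1]$. (C2): with $R(\lambda)=D_1(\lambda)/D_0(\lambda)$, there exists $\lambda_\infty\in(0,1]$ with $R(\lambda_\infty)<\alpha$. *)

theory Defs
  imports "HOL-Probability.Probability"
begin

definition Lfdr :: "(nat \<Rightarrow> real) \<Rightarrow> (real \<Rightarrow> real) \<Rightarrow> (real \<Rightarrow> real) \<Rightarrow> nat \<Rightarrow> real \<Rightarrow> real" where
  "Lfdr \<pi>0 f0 f1 i t = \<pi>0 i * f0 t / (\<pi>0 i * f0 t + (1 - \<pi>0 i) * f1 t)"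

text \<open>V_m(lambda): number of false rejections (theta i = False means null).\<close>
definition Vm :: "(nat \<Rightarrow> real) \<Rightarrow> (real \<Rightarrow> real) \<Rightarrow> (real \<Rightarrow> real) \<Rightarrow>
    (nat \<Rightarrow> 'a \<Rightarrow> bool) \<Rightarrow> (nat \<Rightarrow> 'a \<Rightarrow> real) \<Rightarrow> nat \<Rightarrow> real \<Rightarrow> 'a \<Rightarrow> real" where
  "Vm \<pi>0 f0 f1 \<theta> x m lam \<omega> =
     (\<Sum>i\<in>{1..m}. if Lfdr \<pi>0 f0 f1 i (x i \<omega>) \<le> lam \<and> \<not> \<theta> i \<omega> then 1 else 0)"

definition Dm0 :: "(nat \<Rightarrow> real) \<Rightarrow> (real \<Rightarrow> real) \<Rightarrow> (real \<Rightarrow> real) \<Rightarrow>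
    (nat \<Rightarrow> 'a \<Rightarrow> real) \<Rightarrow> nat \<Rightarrow> real \<Rightarrow> 'a \<Rightarrow> real" where
  "Dm0 \<pi>0 f0 f1 x m lam \<omega> =
     (\<Sum>i\<in>{1..m}. if Lfdr \<pi>0 f0 f1 i (x i \<omega>) \<le> lam then 1 else 0)"

definition Dm1 :: "(nat \<Rightarrow> real) \<Rightarrow> (real \<Rightarrow> real) \<Rightarrow> (real \<Rightarrow> real) \<Rightarrow>
    (nat \<Rightarrow> 'a \<Rightarrow> real) \<Rightarrow> nat \<Rightarrow> real \<Rightarrow> 'a \<Rightarrow> real" where
  "Dm1 \<pi>0 f0 f1 x m lam \<omega> =
     (\<Sum>i\<in>{1..m}. if Lfdr \<pi>0 f0 f1 i (x i \<omega>) \<le> lam then Lfdr \<pi>0 f0 f1 i (x i \<omega>) else 0)"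

text \<open>Estimated FDR (the 0/0 case evaluates to 0, which is the HOL convention x/0 = 0).\<close>
definition FDRhat :: "(nat \<Rightarrow> real) \<Rightarrow> (real \<Rightarrow> real) \<Rightarrow> (real \<Rightarrow> real) \<Rightarrow>
    (nat \<Rightarrow> 'a \<Rightarrow> real) \<Rightarrow> nat \<Rightarrow> real \<Rightarrow> 'a \<Rightarrow> real" where
  "FDRhat \<pi>0 f0 f1 x m lam \<omega> = Dm1 \<pi>0 f0 f1 x m lam \<omega> / Dm0 \<pi>0 f0 f1 x m lam \<omega>"

definition lambda_m :: "(nat \<Rightarrow> real) \<Rightarrow> (real \<Rightarrow> real) \<Rightarrow> (real \<Rightarrow> real) \<Rightarrow>
    (nat \<Rightarrow> 'a \<Rightarrow> real) \<Rightarrow> real \<Rightarrow> nat \<Rightarrow> 'a \<Rightarrow> real" where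
  "lambda_m \<pi>0 f0 f1 x \<alpha> m \<omega> = Sup {lam \<in> {0..1}. FDRhat \<pi>0 f0 f1 x m lam \<omega> \<le> \<alpha>}"

definition FDRm :: "'a measure \<Rightarrow> (nat \<Rightarrow> real) \<Rightarrow> (real \<Rightarrow> real) \<Rightarrow> (real \<Rightarrow> real) \<Rightarrow>
    (nat \<Rightarrow> 'a \<Rightarrow> bool) \<Rightarrow> (nat \<Rightarrow> 'a \<Rightarrow> real) \<Rightarrow> nat \<Rightarrow> ('a \<Rightarrow> real) \<Rightarrow> real" where
  "FDRm M \<pi>0 f0 f1 \<theta> x m Lam =
     (\<integral>\<omega>. Vm \<pi>0 f0 f1 \<theta> x m (Lam \<omega>) \<omega> / max (Dm0 \<pi>0 f0 f1 x m (Lam \<omega>) \<omega>) 1 \<partial>M)"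

definition conv_in_prob :: "'a measure \<Rightarrow> (nat \<Rightarrow> 'a \<Rightarrow> real) \<Rightarrow> real \<Rightarrow> bool" where
  "conv_in_prob M X c \<longleftrightarrow>
     (\<forall>\<epsilon>>0. ((\<lambda>m. measure M {\<omega> \<in> space M. \<bar>X m \<omega> - c\<bar> > \<epsilon>}) \<longlongrightarrow> 0) sequentially)"

end

(*
  Fix lambda_inf from (C2). With probability tending to one the empirical counts at
  lambda_inf are close to m D0(lambda_inf) and m D1(lambda_inf), so lambda_inf is
  feasible (FDRhat <= alpha); hence lambda_m >= lambda_inf and D_{m,0}(lambda_m) is of
  order m. On the same event V_m and the Lfdr-sum are within eps m of m D1 on a finite
  grid of [0,1]. Since both have the limit D1, bracketing lambda_m between grid points
  and a feasible lambda' just below it, and using uniform continuity of D1, gives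
  V_m(lambda_m) <= alpha D_{m,0}(lambda_m) + 3 eps m, so the false discovery proportion
  is at most alpha + O(eps) there; elsewhere it is at most 1.
*)
theory Submission
  imports Defs
begin

lemma bounds_of_abs_divide_diff_le:
  fixes X a e m :: real
  assumes "0 < m" "\<bar>X / m - a\<bar> \<le> e"
  shows "m * (a - e) \<le> X" "X \<le> m * (a + e)"
proof -
  have "a - e \<le> X / m" "X / m \<le> a + e" using assms(2) by linarith+
  then show "m * (a - e) \<le> X" "X \<le> m * (a + e)" using assms(1)
    by (simp_all add: pos_le_divide_eq pos_divide_le_eq mult.commute)
qed

lemma feasible_of_abs_divide_diff_le:
  fixes a b A B m \<alpha> \<epsilon> :: real
  assumes "0 < m" "0 \<le> \<alpha>" "\<bar>a / m - A\<bar> \<le> \<epsilon>" "\<bar>b / m - B\<bar> \<le> \<epsilon>"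
    and "\<epsilon> \<le> A / 2" "(1 + \<alpha>) * \<epsilon> \<le> \<alpha> * A - B"
  shows "b \<le> \<alpha> * a" "m * (A / 2) \<le> a"
proof -
  have a: "m * (A - \<epsilon>) \<le> a" and b: "b \<le> m * (B + \<epsilon>)"
    using bounds_of_abs_divide_diff_le assms(1,3,4) by blast+
  have "B + \<epsilon> \<le> \<alpha> * (A - \<epsilon>)" using assms(6) by (simp add: algebra_simps)
  then have "m * (B + \<epsilon>) \<le> \<alpha> * (m * (A - \<epsilon>))"
    using assms(1) by (simp add: mult_left_mono mult.left_commute)
  also have "\<dots> \<le> \<alpha> * a" using a assms(2) by (rule mult_left_mono)
  finally show "b \<le> \<alpha> * a" using b by linarith
  show "m * (A / 2) \<le> a" using a assms(1,5) mult_left_mono[of "A / 2" "A - \<epsilon>" m] by linarith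
qed

lemma small_tolerance_exists:
  fixes \<alpha> \<delta> A B :: real
  assumes "0 < \<alpha>" "0 < \<delta>" "0 < A" "B / A < \<alpha>"
  obtains \<epsilon> where "0 < \<epsilon>" "\<epsilon> \<le> A / 2" "(1 + \<alpha>) * \<epsilon> \<le> \<alpha> * A - B" "3 * \<epsilon> / (A / 2) \<le> \<delta> / 2"
proof
  define \<epsilon> where "\<epsilon> = min (\<delta> * A / 12) (min (A / 2) ((\<alpha> * A - B) / (1 + \<alpha>)))"
  have gap: "0 < \<alpha> * A - B" using assms(3,4) by (simp add: pos_divide_less_eq)
  have \<epsilon>_le: "\<epsilon> \<le> \<delta> * A / 12" "\<epsilon> \<le> A / 2" "\<epsilon> \<le> (\<alpha> * A - B) / (1 + \<alpha>)"
    unfolding \<epsilon>_def by (meson min.cobounded1 min.cobounded2 order.trans)+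
  show "0 < \<epsilon>" using gap assms(1-3) by (simp add: \<epsilon>_def)
  show "\<epsilon> \<le> A / 2" by (fact \<epsilon>_le(2))
  show "(1 + \<alpha>) * \<epsilon> \<le> \<alpha> * A - B"
    using \<epsilon>_le(3) assms(1) by (simp add: le_divide_eq mult.commute)
  show "3 * \<epsilon> / (A / 2) \<le> \<delta> / 2"
    using \<epsilon>_le(1) assms(3) by (simp add: divide_le_eq field_simps)
qed

lemma grid_points_bracket:
  fixes l l' :: real and N :: nat
  assumes "0 < N" "0 \<le> l'" "l' \<le> l" "l \<le> 1" "l - l' < 1 / N"
  obtains ka kb where "ka \<le> N" "kb \<le> N" "ka / N \<le> l'" "l \<le> kb / N" "kb / N - ka / N < 3 / N"
proof
  define ka where "ka = nat \<lfloor>l' * N\<rfloor>"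
  define kb where "kb = nat \<lceil>l * N\<rceil>"
  have ka: "real ka \<le> l' * N" "l' * N < real ka + 1"
    using assms(2) by (auto simp: ka_def)
  have kb: "l * N \<le> real kb" "real kb < l * N + 1"
    using assms(2,3) by (auto simp: kb_def) linarith
  have "l * N \<le> N" "l' * N \<le> N" using assms by auto
  then show "ka \<le> N" "kb \<le> N" using ka kb
    by (simp_all add: kb_def ceiling_le_iff)
  show "ka / N \<le> l'" "l \<le> kb / N" using ka(1) kb(1) assms(1)
    by (simp_all add: divide_le_eq le_divide_eq)
  have "real kb - real ka < (l - l') * N + 2" using ka kb by (simp add: left_diff_distrib)
  also have "\<dots> < 3" using assms(1,5) by (simp add: less_divide_eq algebra_simps)
  finally show "kb / N - ka / N < 3 / N" using assms(1) by (simp add: diff_divide_distrib[symmetric] divide_strict_right_mono)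
qed

lemma continuous_on_Icc_grid_modulus:
  fixes f :: "real \<Rightarrow> real"
  assumes "continuous_on {0..1} f" "0 < \<epsilon>" "0 < r"
  obtains N :: nat where "0 < N"
    "\<And>s t. s \<in> {0..1} \<Longrightarrow> t \<in> {0..1} \<Longrightarrow> \<bar>t - s\<bar> < r / N \<Longrightarrow> \<bar>f t - f s\<bar> < \<epsilon>"
proof -
  obtain h where "0 < h"
    and h: "\<And>s t. s \<in> {0..1} \<Longrightarrow> t \<in> {0..1} \<Longrightarrow> dist t s < h \<Longrightarrow> dist (f t) (f s) < \<epsilon>"
    using compact_uniformly_continuous[OF assms(1) compact_Icc] assms(2)
    unfolding uniformly_continuous_on_def by metis
  obtain N :: nat where N: "r / h < N" using reals_Archimedean2 by blast
  moreover have "0 < r / h" using \<open>0 < h\<close> assms(3) by simp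
  ultimately have "0 < real N" by linarith
  then have "0 < N" "r / N < h" using N \<open>0 < h\<close> by (simp_all add: field_simps)
  then show ?thesis using h that by (fastforce simp: dist_real_def)
qed

lemma bound_at_threshold_of_bracket:
  fixes V C W L :: "real \<Rightarrow> real"
  assumes mono: "mono V" "mono C" "mono W" and "0 \<le> \<alpha>"
    and order: "ta \<le> l'" "l' \<le> l" "l \<le> tb"
    and feasible: "W l' \<le> \<alpha> * C l'"
    and close: "V tb \<le> m * (L tb + \<epsilon>)" "m * (L ta - \<epsilon>) \<le> W ta"
    and modulus: "L tb \<le> L ta + \<epsilon>" and "0 \<le> m"
  shows "V l \<le> \<alpha> * C l + 3 * \<epsilon> * m"
proof -
  have "V l \<le> V tb" using mono(1) order(3) by (rule monoD)
  also have "\<dots> \<le> m * (L tb + \<epsilon>)" by (rule close(1))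
  also have "\<dots> \<le> m * (L ta - \<epsilon>) + 3 * \<epsilon> * m"
    using modulus \<open>0 \<le> m\<close> mult_left_mono[of "L tb + \<epsilon>" "L ta - \<epsilon> + 3 * \<epsilon>" m]
    by (simp add: algebra_simps)
  also have "\<dots> \<le> W l' + 3 * \<epsilon> * m"
    using close(2) monoD[OF mono(3) order(1)] by simp
  also have "\<dots> \<le> \<alpha> * C l + 3 * \<epsilon> * m"
    using feasible mult_left_mono[OF monoD[OF mono(2) order(2)] \<open>0 \<le> \<alpha>\<close>] by simp
  finally show ?thesis .
qed

lemma divide_max_1_le:
  fixes v d \<alpha> e m c :: real
  assumes "0 \<le> v" "v \<le> \<alpha> * d + e * m" "m * c \<le> d" "0 < m" "0 < c" "0 \<le> e"
  shows "v / max d 1 \<le> \<alpha> + e / c"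
proof -
  have d: "0 < d" using assms(3-5) by (smt (verit) mult_pos_pos)
  have "v / max d 1 \<le> v / d" using assms(1) d by (intro divide_left_mono) auto
  also have "\<dots> \<le> \<alpha> + e * m / d" using assms(2) d by (simp add: divide_le_eq algebra_simps)
  also have "e * m / d \<le> e * m / (m * c)"
    using assms(3-6) d by (intro divide_left_mono) auto
  also have "e * m / (m * c) = e / c" using assms(4) by simp
  finally show ?thesis by simp
qed

lemma tendsto_measure_Un_zero:
  assumes "\<And>m. A m \<in> sets M" "\<And>m. B m \<in> sets M"
    and "(\<lambda>m. measure M (A m)) \<longlonglongrightarrow> 0" "(\<lambda>m. measure M (B m)) \<longlonglongrightarrow> 0"
  shows "(\<lambda>m. measure M (A m \<union> B m)) \<longlonglongrightarrow> 0"
proof (rule tendsto_sandwich[where f="\<lambda>_. 0" and h="\<lambda>m. measure M (A m) + measure M (B m)"])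
  show "\<forall>\<^sub>F m in sequentially. measure M (A m \<union> B m) \<le> measure M (A m) + measure M (B m)"
    by (intro always_eventually allI measure_Un_le assms)
  show "(\<lambda>m. measure M (A m) + measure M (B m)) \<longlonglongrightarrow> 0"
    using tendsto_add[OF assms(3,4)] by simp
qed simp_all

lemma tendsto_measure_UN_zero:
  assumes "finite I" "\<And>k m. k \<in> I \<Longrightarrow> A k m \<in> sets M"
    and "\<And>k. k \<in> I \<Longrightarrow> (\<lambda>m. measure M (A k m)) \<longlonglongrightarrow> 0"
  shows "(\<lambda>m. measure M (\<Union>k\<in>I. A k m)) \<longlonglongrightarrow> 0"
proof (rule tendsto_sandwich[where f="\<lambda>_. 0" and h="\<lambda>m. \<Sum>k\<in>I. measure M (A k m)"])
  show "\<forall>\<^sub>F m in sequentially. measure M (\<Union>k\<in>I. A k m) \<le> (\<Sum>k\<in>I. measure M (A k m))"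
    using measure_UNION_le[OF assms(1), of "\<lambda>k. A k m" M for m] assms(2) by auto
  show "(\<lambda>m. \<Sum>k\<in>I. measure M (A k m)) \<longlonglongrightarrow> 0"
    using tendsto_sum[of I "\<lambda>k m. measure M (A k m)" "\<lambda>_. 0"] assms(3) by simp
qed simp_all

lemma tendsto_measure_deviation_finite:
  fixes X :: "'i \<Rightarrow> nat \<Rightarrow> 'a \<Rightarrow> real"
  assumes "finite T" "\<And>t. t \<in> T \<Longrightarrow> conv_in_prob M (X t) (c t)"
    and "\<And>t m. t \<in> T \<Longrightarrow> X t m \<in> borel_measurable M" and "0 < \<epsilon>"
  shows "(\<lambda>m. measure M {\<omega> \<in> space M. \<exists>t\<in>T. \<epsilon> < \<bar>X t m \<omega> - c t\<bar>}) \<longlonglongrightarrow> 0"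
proof -
  have "{\<omega> \<in> space M. \<exists>t\<in>T. \<epsilon> < \<bar>X t m \<omega> - c t\<bar>}
      = (\<Union>t\<in>T. {\<omega> \<in> space M. \<epsilon> < \<bar>X t m \<omega> - c t\<bar>})" for m
    by auto
  moreover have "(\<lambda>m. measure M (\<Union>t\<in>T. {\<omega> \<in> space M. \<epsilon> < \<bar>X t m \<omega> - c t\<bar>})) \<longlonglongrightarrow> 0"
    using assms by (intro tendsto_measure_UN_zero) (auto simp: conv_in_prob_def)
  ultimately show ?thesis by simp
qed

lemma (in prob_space) expectation_le_const_plus_prob:
  assumes "B \<in> events" "0 \<le> a" "\<And>\<omega>. \<omega> \<in> space M \<Longrightarrow> f \<omega> \<le> a + indicator B \<omega>"
  shows "expectation f \<le> a + prob B"
proof (cases "integrable M f")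
  case True
  have "expectation f \<le> expectation (\<lambda>\<omega>. a + indicator B \<omega>)"
    using True assms by (intro integral_mono) (auto simp: less_top[symmetric])
  also have "\<dots> = a + prob B"
    using assms(1) by (simp add: less_top[symmetric] prob_space)
  finally show ?thesis .
next
  case False
  then show ?thesis using assms(2) by (simp add: not_integrable_integral_eq)
qed

lemma Lfdr_nonneg:
  assumes "0 \<le> \<pi>0 i" "\<pi>0 i \<le> 1" "0 \<le> f0 t" "0 \<le> f1 t"
  shows "0 \<le> Lfdr \<pi>0 f0 f1 i t"
  using assms unfolding Lfdr_def by (intro divide_nonneg_nonneg add_nonneg_nonneg) auto

lemma mono_Dm0: "mono (\<lambda>lam. Dm0 \<pi>0 f0 f1 x m lam \<omega>)"
  unfolding Dm0_def by (intro monoI sum_mono) auto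

lemma mono_Vm: "mono (\<lambda>lam. Vm \<pi>0 f0 f1 \<theta> x m lam \<omega>)"
  unfolding Vm_def by (intro monoI sum_mono) auto

lemma mono_Dm1:
  assumes "\<And>i. i \<in> {1..m} \<Longrightarrow> 0 \<le> Lfdr \<pi>0 f0 f1 i (x i \<omega>)"
  shows "mono (\<lambda>lam. Dm1 \<pi>0 f0 f1 x m lam \<omega>)"
  unfolding Dm1_def by (intro monoI sum_mono) (use assms in auto)

lemma Vm_nonneg: "0 \<le> Vm \<pi>0 f0 f1 \<theta> x m lam \<omega>"
  unfolding Vm_def by (auto intro: sum_nonneg)

lemma Vm_le_Dm0: "Vm \<pi>0 f0 f1 \<theta> x m lam \<omega> \<le> Dm0 \<pi>0 f0 f1 x m lam \<omega>"
  unfolding Vm_def Dm0_def by (intro sum_mono) auto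

lemma FDP_le_1: "Vm \<pi>0 f0 f1 \<theta> x m lam \<omega> / max (Dm0 \<pi>0 f0 f1 x m lam \<omega>) 1 \<le> 1"
  using Vm_le_Dm0[of \<pi>0 f0 f1 \<theta> x m lam \<omega>] by (auto simp: divide_le_eq_1)

lemma Dm1_eq_0_if_Dm0_eq_0:
  assumes "Dm0 \<pi>0 f0 f1 x m lam \<omega> = 0"
  shows "Dm1 \<pi>0 f0 f1 x m lam \<omega> = 0"
proof -
  have "\<forall>i\<in>{1..m}. \<not> Lfdr \<pi>0 f0 f1 i (x i \<omega>) \<le> lam"
    using assms unfolding Dm0_def by (subst (asm) sum_nonneg_eq_0_iff) (auto split: if_splits)
  then show ?thesis unfolding Dm1_def by simp
qed

lemma FDRhat_le_iff:
  assumes "0 \<le> \<alpha>"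
  shows "FDRhat \<pi>0 f0 f1 x m lam \<omega> \<le> \<alpha> \<longleftrightarrow> Dm1 \<pi>0 f0 f1 x m lam \<omega> \<le> \<alpha> * Dm0 \<pi>0 f0 f1 x m lam \<omega>"
proof (cases "Dm0 \<pi>0 f0 f1 x m lam \<omega> = 0")
  case True
  then show ?thesis using assms Dm1_eq_0_if_Dm0_eq_0[OF True] by (simp add: FDRhat_def)
next
  case False
  moreover have "0 \<le> Dm0 \<pi>0 f0 f1 x m lam \<omega>"
    unfolding Dm0_def by (auto intro: sum_nonneg)
  ultimately have "0 < Dm0 \<pi>0 f0 f1 x m lam \<omega>" by linarith
  then show ?thesis by (simp add: FDRhat_def pos_divide_le_eq mult.commute)
qed

lemma
  assumes "l \<in> {0..1}" "FDRhat \<pi>0 f0 f1 x m l \<omega> \<le> \<alpha>"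
  shows le_lambda_m: "l \<le> lambda_m \<pi>0 f0 f1 x \<alpha> m \<omega>"
    and lambda_m_le_1: "lambda_m \<pi>0 f0 f1 x \<alpha> m \<omega> \<le> 1"
    and lambda_m_approx: "0 < e \<Longrightarrow> \<exists>l'\<in>{0..1}. FDRhat \<pi>0 f0 f1 x m l' \<omega> \<le> \<alpha> \<and>
          lambda_m \<pi>0 f0 f1 x \<alpha> m \<omega> - e < l' \<and> l' \<le> lambda_m \<pi>0 f0 f1 x \<alpha> m \<omega>"
proof -
  define S where "S = {lam \<in> {0..1}. FDRhat \<pi>0 f0 f1 x m lam \<omega> \<le> \<alpha>}"
  have lm: "lambda_m \<pi>0 f0 f1 x \<alpha> m \<omega> = Sup S" by (simp add: lambda_m_def S_def)
  have "l \<in> S" "bdd_above S" using assms by (auto simp: S_def intro: bdd_aboveI[of _ 1])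
  then show "l \<le> lambda_m \<pi>0 f0 f1 x \<alpha> m \<omega>" unfolding lm by (rule cSup_upper)
  show "lambda_m \<pi>0 f0 f1 x \<alpha> m \<omega> \<le> 1"
    unfolding lm using \<open>l \<in> S\<close> by (intro cSup_least) (auto simp: S_def)
  show "0 < e \<Longrightarrow> \<exists>l'\<in>{0..1}. FDRhat \<pi>0 f0 f1 x m l' \<omega> \<le> \<alpha> \<and>
          lambda_m \<pi>0 f0 f1 x \<alpha> m \<omega> - e < l' \<and> l' \<le> lambda_m \<pi>0 f0 f1 x \<alpha> m \<omega>"
    using less_cSupE[of "Sup S - e" S] cSup_upper[OF _ \<open>bdd_above S\<close>] \<open>l \<in> S\<close>
    unfolding lm by (force simp: S_def)
qed

lemma borel_measurable_Lfdr:
  assumes "f0 \<in> borel_measurable borel" "f1 \<in> borel_measurable borel"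
  shows "Lfdr \<pi>0 f0 f1 i \<in> borel_measurable borel"
  unfolding Lfdr_def[abs_def] using assms by measurable

context
  fixes M :: "'a measure" and f0 f1 :: "real \<Rightarrow> real" and x :: "nat \<Rightarrow> 'a \<Rightarrow> real"
  assumes f_meas: "f0 \<in> borel_measurable borel" "f1 \<in> borel_measurable borel"
    and x_meas: "\<And>i. i \<ge> 1 \<Longrightarrow> x i \<in> borel_measurable M"
begin

lemma borel_measurable_Lfdr_x: "i \<ge> 1 \<Longrightarrow> (\<lambda>\<omega>. Lfdr \<pi>0 f0 f1 i (x i \<omega>)) \<in> borel_measurable M"
  using measurable_compose[OF x_meas borel_measurable_Lfdr[OF f_meas]] .

lemma borel_measurable_Dm0: "Dm0 \<pi>0 f0 f1 x m lam \<in> borel_measurable M"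
  unfolding Dm0_def[abs_def]
  by (intro borel_measurable_sum) (use borel_measurable_Lfdr_x in measurable)

lemma borel_measurable_Dm1: "Dm1 \<pi>0 f0 f1 x m lam \<in> borel_measurable M"
  unfolding Dm1_def[abs_def]
  by (intro borel_measurable_sum) (use borel_measurable_Lfdr_x in measurable)

lemma borel_measurable_Vm:
  assumes "\<And>i. i \<ge> 1 \<Longrightarrow> \<theta> i \<in> measurable M (count_space UNIV)"
  shows "Vm \<pi>0 f0 f1 \<theta> x m lam \<in> borel_measurable M"
  unfolding Vm_def[abs_def]
  by (intro borel_measurable_sum) (use borel_measurable_Lfdr_x assms in measurable)

end

lemma FDP_at_lambda_m_le:
  fixes m N :: nat
  assumes Lfdr_x_nonneg: "\<And>i. i \<in> {1..m} \<Longrightarrow> 0 \<le> Lfdr \<pi>0 f0 f1 i (x i \<omega>)"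
    and "0 < m" "0 < N" "0 \<le> \<alpha>" "0 \<le> \<epsilon>"
    and li: "li \<in> {0..1}" "\<epsilon> \<le> D0 li / 2" "(1 + \<alpha>) * \<epsilon> \<le> \<alpha> * D0 li - D1 li" "0 < D0 li"
    and modulus: "\<And>s t. s \<in> {0..1} \<Longrightarrow> t \<in> {0..1} \<Longrightarrow> \<bar>t - s\<bar> < 3 / N \<Longrightarrow> \<bar>D1 t - D1 s\<bar> < \<epsilon>"
    and close: "\<And>lam. lam \<in> insert li ((\<lambda>k. k / N) ` {..N}) \<Longrightarrow>
        \<bar>Dm0 \<pi>0 f0 f1 x m lam \<omega> / m - D0 lam\<bar> \<le> \<epsilon> \<and>
        \<bar>Dm1 \<pi>0 f0 f1 x m lam \<omega> / m - D1 lam\<bar> \<le> \<epsilon> \<and>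
        \<bar>Vm \<pi>0 f0 f1 \<theta> x m lam \<omega> / m - D1 lam\<bar> \<le> \<epsilon>"
  shows "Vm \<pi>0 f0 f1 \<theta> x m (lambda_m \<pi>0 f0 f1 x \<alpha> m \<omega>) \<omega>
           / max (Dm0 \<pi>0 f0 f1 x m (lambda_m \<pi>0 f0 f1 x \<alpha> m \<omega>) \<omega>) 1
         \<le> \<alpha> + 3 * \<epsilon> / (D0 li / 2)"
proof -
  let ?lam = "lambda_m \<pi>0 f0 f1 x \<alpha> m \<omega>"
  have m: "0 < real m" using \<open>0 < m\<close> by simp
  have feasible_li: "Dm1 \<pi>0 f0 f1 x m li \<omega> \<le> \<alpha> * Dm0 \<pi>0 f0 f1 x m li \<omega>"
    and large_li: "m * (D0 li / 2) \<le> Dm0 \<pi>0 f0 f1 x m li \<omega>"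
    using feasible_of_abs_divide_diff_le[OF m \<open>0 \<le> \<alpha>\<close> _ _ li(2,3)] close[of li] by auto
  then have FDRhat_li: "FDRhat \<pi>0 f0 f1 x m li \<omega> \<le> \<alpha>" by (simp add: FDRhat_le_iff \<open>0 \<le> \<alpha>\<close>)
  \<comment> \<open>The supremum lambda_m need not be feasible itself, so we use a feasible l' close to it.\<close>
  obtain l' where l': "l' \<in> {0..1}" "FDRhat \<pi>0 f0 f1 x m l' \<omega> \<le> \<alpha>" "?lam - 1 / N < l'" "l' \<le> ?lam"
    using lambda_m_approx[OF li(1) FDRhat_li, of "1 / N"] \<open>0 < N\<close> by auto
  obtain ka kb where k: "ka \<le> N" "kb \<le> N" "ka / N \<le> l'" "?lam \<le> kb / N" "kb / N - ka / N < 3 / N"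
    using grid_points_bracket[of N l' ?lam] l' lambda_m_le_1[OF li(1) FDRhat_li] \<open>0 < N\<close> by auto
  have grid01: "k / N \<in> {0..1}" if "k \<le> N" for k using that \<open>0 < N\<close> by auto
  have bound: "Vm \<pi>0 f0 f1 \<theta> x m ?lam \<omega> \<le> \<alpha> * Dm0 \<pi>0 f0 f1 x m ?lam \<omega> + 3 * \<epsilon> * m"
  proof (rule bound_at_threshold_of_bracket[where V = "\<lambda>lam. Vm \<pi>0 f0 f1 \<theta> x m lam \<omega>"
        and C = "\<lambda>lam. Dm0 \<pi>0 f0 f1 x m lam \<omega>" and W = "\<lambda>lam. Dm1 \<pi>0 f0 f1 x m lam \<omega>"
        and L = D1 and ta = "ka / N" and tb = "kb / N" and l' = l'])
    show "mono (\<lambda>lam. Dm1 \<pi>0 f0 f1 x m lam \<omega>)" using Lfdr_x_nonneg by (rule mono_Dm1)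
    show "Dm1 \<pi>0 f0 f1 x m l' \<omega> \<le> \<alpha> * Dm0 \<pi>0 f0 f1 x m l' \<omega>" using l'(2) by (simp add: FDRhat_le_iff \<open>0 \<le> \<alpha>\<close>)
    show "Vm \<pi>0 f0 f1 \<theta> x m (kb / N) \<omega> \<le> m * (D1 (kb / N) + \<epsilon>)"
      using bounds_of_abs_divide_diff_le(2)[OF m] close[of "kb / N"] k(2) by auto
    show "m * (D1 (ka / N) - \<epsilon>) \<le> Dm1 \<pi>0 f0 f1 x m (ka / N) \<omega>"
      using bounds_of_abs_divide_diff_le(1)[OF m] close[of "ka / N"] k(1) by auto
    show "D1 (kb / N) \<le> D1 (ka / N) + \<epsilon>"
      using modulus[OF grid01[OF k(1)] grid01[OF k(2)]] k(3-5) l'(4) by (auto simp: abs_less_iff)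
  qed (use mono_Vm mono_Dm0 \<open>0 \<le> \<alpha>\<close> l'(4) k(3,4) in auto)
  have large: "m * (D0 li / 2) \<le> Dm0 \<pi>0 f0 f1 x m ?lam \<omega>"
    using large_li monoD[OF mono_Dm0 le_lambda_m[OF li(1) FDRhat_li]] by (rule order.trans)
  show ?thesis
    by (rule divide_max_1_le[OF Vm_nonneg bound large m]) (use li(4) \<open>0 \<le> \<epsilon>\<close> in auto)
qed

lemma FDRm_le_plus_measure:
  assumes "prob_space M" "B \<in> sets M" "0 \<le> a"
    and "\<And>\<omega>. \<omega> \<in> space M - B \<Longrightarrow>
      Vm \<pi>0 f0 f1 \<theta> x m (Lam \<omega>) \<omega> / max (Dm0 \<pi>0 f0 f1 x m (Lam \<omega>) \<omega>) 1 \<le> a"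
  shows "FDRm M \<pi>0 f0 f1 \<theta> x m Lam \<le> a + measure M B"
proof -
  interpret prob_space M by (rule assms(1))
  show ?thesis unfolding FDRm_def
  proof (rule expectation_le_const_plus_prob[OF assms(2,3)])
    fix \<omega> assume "\<omega> \<in> space M"
    show "Vm \<pi>0 f0 f1 \<theta> x m (Lam \<omega>) \<omega> / max (Dm0 \<pi>0 f0 f1 x m (Lam \<omega>) \<omega>) 1
        \<le> a + indicator B \<omega>"
    proof (cases "\<omega> \<in> B")
      case True
      then have "indicator B \<omega> = (1 :: real)" by simp
      then show ?thesis using FDP_le_1[of \<pi>0 f0 f1 \<theta> x m "Lam \<omega>" \<omega>] assms(3) by linarith
    next
      case False
      then show ?thesis using assms(4) \<open>\<omega> \<in> space M\<close> by simp
    qed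
  qed
qed

lemma eventually_FDRm_lambda_m_le:
  fixes M :: "'a measure" and li \<delta> :: real
  assumes "prob_space M" "0 < \<alpha>" "0 < \<delta>"
    and Lfdr_x_nonneg: "\<And>i \<omega>. i \<ge> 1 \<Longrightarrow> \<omega> \<in> space M \<Longrightarrow> 0 \<le> Lfdr \<pi>0 f0 f1 i (x i \<omega>)"
    and meas: "\<And>m lam. Dm0 \<pi>0 f0 f1 x m lam \<in> borel_measurable M"
      "\<And>m lam. Dm1 \<pi>0 f0 f1 x m lam \<in> borel_measurable M"
      "\<And>m lam. Vm \<pi>0 f0 f1 \<theta> x m lam \<in> borel_measurable M"
    and C1_D0: "\<And>lam. lam \<in> {0..1} \<Longrightarrow>
        conv_in_prob M (\<lambda>m \<omega>. Dm0 \<pi>0 f0 f1 x m lam \<omega> / real m) (D0 lam)"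
    and C1_D1: "\<And>lam. lam \<in> {0..1} \<Longrightarrow>
        conv_in_prob M (\<lambda>m \<omega>. Dm1 \<pi>0 f0 f1 x m lam \<omega> / real m) (D1 lam)"
    and C1_V: "\<And>lam. lam \<in> {0..1} \<Longrightarrow>
        conv_in_prob M (\<lambda>m \<omega>. Vm \<pi>0 f0 f1 \<theta> x m lam \<omega> / real m) (D1 lam)"
    and D1_cont: "continuous_on {0..1} D1"
    and li: "li \<in> {0..1}" "0 < D0 li" "D1 li / D0 li < \<alpha>"
  shows "\<forall>\<^sub>F m in sequentially. FDRm M \<pi>0 f0 f1 \<theta> x m (lambda_m \<pi>0 f0 f1 x \<alpha> m) \<le> \<alpha> + \<delta>"
proof -
  interpret prob_space M by (rule assms(1))
  obtain \<epsilon> where \<epsilon>: "0 < \<epsilon>" "\<epsilon> \<le> D0 li / 2" "(1 + \<alpha>) * \<epsilon> \<le> \<alpha> * D0 li - D1 li"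
      "3 * \<epsilon> / (D0 li / 2) \<le> \<delta> / 2"
    using small_tolerance_exists[OF \<open>0 < \<alpha>\<close> \<open>0 < \<delta>\<close> li(2,3)] by blast
  obtain N :: nat where "0 < N" and modulus:
      "\<And>s t. s \<in> {0..1} \<Longrightarrow> t \<in> {0..1} \<Longrightarrow> \<bar>t - s\<bar> < 3 / N \<Longrightarrow> \<bar>D1 t - D1 s\<bar> < \<epsilon>"
    using continuous_on_Icc_grid_modulus[OF D1_cont \<epsilon>(1), of 3] by auto
  define T where "T = insert li ((\<lambda>k. real k / real N) ` {..N})"
  have T: "finite T" "T \<subseteq> {0..1}" using li(1) \<open>0 < N\<close> by (auto simp: T_def)
  define B where "B m = {\<omega> \<in> space M. \<exists>lam\<in>T. \<epsilon> < \<bar>Dm0 \<pi>0 f0 f1 x m lam \<omega> / m - D0 lam\<bar>}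
      \<union> {\<omega> \<in> space M. \<exists>lam\<in>T. \<epsilon> < \<bar>Dm1 \<pi>0 f0 f1 x m lam \<omega> / m - D1 lam\<bar>}
      \<union> {\<omega> \<in> space M. \<exists>lam\<in>T. \<epsilon> < \<bar>Vm \<pi>0 f0 f1 \<theta> x m lam \<omega> / m - D1 lam\<bar>}" for m
  have "(\<lambda>m. prob (B m)) \<longlonglongrightarrow> 0"
    unfolding B_def using T meas \<epsilon>(1) C1_D0 C1_D1 C1_V
    by (intro tendsto_measure_Un_zero tendsto_measure_deviation_finite) (auto simp: B_def)
  then have small: "\<forall>\<^sub>F m in sequentially. prob (B m) < \<delta> / 2"
    by (rule order_tendstoD(2)) (use \<open>0 < \<delta>\<close> in simp)
  have bound: "FDRm M \<pi>0 f0 f1 \<theta> x m (lambda_m \<pi>0 f0 f1 x \<alpha> m) \<le> \<alpha> + \<delta> / 2 + prob (B m)"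
    if "0 < m" for m
  proof (rule FDRm_le_plus_measure[OF assms(1)])
    show "B m \<in> events" unfolding B_def using T(1) meas by measurable
    fix \<omega> assume "\<omega> \<in> space M - B m"
    then have "Vm \<pi>0 f0 f1 \<theta> x m (lambda_m \<pi>0 f0 f1 x \<alpha> m \<omega>) \<omega>
        / max (Dm0 \<pi>0 f0 f1 x m (lambda_m \<pi>0 f0 f1 x \<alpha> m \<omega>) \<omega>) 1 \<le> \<alpha> + 3 * \<epsilon> / (D0 li / 2)"
      using \<open>0 < m\<close> \<open>0 < N\<close> \<open>0 < \<alpha>\<close> \<epsilon> li modulus Lfdr_x_nonneg
      by (intro FDP_at_lambda_m_le[where ?D0.0 = D0 and ?D1.0 = D1 and li = li and N = N])
        (auto simp: B_def T_def not_less)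
    then show "Vm \<pi>0 f0 f1 \<theta> x m (lambda_m \<pi>0 f0 f1 x \<alpha> m \<omega>) \<omega>
        / max (Dm0 \<pi>0 f0 f1 x m (lambda_m \<pi>0 f0 f1 x \<alpha> m \<omega>) \<omega>) 1 \<le> \<alpha> + \<delta> / 2"
      using \<epsilon>(4) by linarith
  qed (use \<open>0 < \<alpha>\<close> \<open>0 < \<delta>\<close> in auto)
  show ?thesis
    using small eventually_gt_at_top[of 0]
  proof eventually_elim
    case (elim m)
    then show ?case using bound[of m] by linarith
  qed
qed

theorem proposition2p2:
  fixes M :: "'a measure"
    and \<theta> :: "nat \<Rightarrow> 'a \<Rightarrow> bool"
    and x :: "nat \<Rightarrow> 'a \<Rightarrow> real"
    and \<pi>0 :: "nat \<Rightarrow> real"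
    and f0 f1 :: "real \<Rightarrow> real"
    and D0 D1 :: "real \<Rightarrow> real"
    and \<alpha> :: real
  assumes P: "prob_space M"
    and \<alpha>: "0 < \<alpha>" "\<alpha> < 1"
    and \<pi>0: "\<And>i. i \<ge> 1 \<Longrightarrow> 0 \<le> \<pi>0 i \<and> \<pi>0 i \<le> 1"
    and f0_meas: "f0 \<in> borel_measurable borel"
    and f1_meas: "f1 \<in> borel_measurable borel"
    and f0_dens: "\<And>t. t \<in> {0..1} \<Longrightarrow> 0 \<le> f0 t" "set_integrable lborel {0..1::real} f0"
                 "(LINT t:{0..1}|lborel. f0 t) = 1"
    and f1_dens: "\<And>t. t \<in> {0..1} \<Longrightarrow> 0 \<le> f1 t" "set_integrable lborel {0..1::real} f1"
                 "(LINT t:{0..1}|lborel. f1 t) = 1"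
    and \<theta>_meas: "\<And>i. i \<ge> 1 \<Longrightarrow> \<theta> i \<in> measurable M (count_space UNIV)"
    and x_meas: "\<And>i. i \<ge> 1 \<Longrightarrow> x i \<in> borel_measurable M"
    and x_range: "\<And>i \<omega>. i \<ge> 1 \<Longrightarrow> \<omega> \<in> space M \<Longrightarrow> x i \<omega> \<in> {0..1}"
    and law0: "\<And>i A. i \<ge> 1 \<Longrightarrow> A \<in> sets borel \<Longrightarrow>
        measure M {\<omega> \<in> space M. x i \<omega> \<in> A \<and> \<not> \<theta> i \<omega>}
          = \<pi>0 i * (LINT t:(A \<inter> {0..1})|lborel. f0 t)"
    and law1: "\<And>i A. i \<ge> 1 \<Longrightarrow> A \<in> sets borel \<Longrightarrow>
        measure M {\<omega> \<in> space M. x i \<omega> \<in> A \<and> \<theta> i \<omega>}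
          = (1 - \<pi>0 i) * (LINT t:(A \<inter> {0..1})|lborel. f1 t)"
    and C1_D0: "\<And>lam. lam \<in> {0..1} \<Longrightarrow>
        conv_in_prob M (\<lambda>m \<omega>. Dm0 \<pi>0 f0 f1 x m lam \<omega> / real m) (D0 lam)"
    and C1_D1: "\<And>lam. lam \<in> {0..1} \<Longrightarrow>
        conv_in_prob M (\<lambda>m \<omega>. Dm1 \<pi>0 f0 f1 x m lam \<omega> / real m) (D1 lam)"
    and C1_V: "\<And>lam. lam \<in> {0..1} \<Longrightarrow>
        conv_in_prob M (\<lambda>m \<omega>. Vm \<pi>0 f0 f1 \<theta> x m lam \<omega> / real m) (D1 lam)"
    and C1_cont: "continuous_on {0..1} D0" "continuous_on {0..1} D1"
    and C2: "\<exists>lam_inf \<in> {0<..1}. D0 lam_inf > 0 \<and> D1 lam_inf / D0 lam_inf < \<alpha>"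
  shows "limsup (\<lambda>m. ereal (FDRm M \<pi>0 f0 f1 \<theta> x m (lambda_m \<pi>0 f0 f1 x \<alpha> m))) \<le> ereal \<alpha>"
proof (rule ereal_le_epsilon2)
  obtain li where "li \<in> {0<..1}" "0 < D0 li" "D1 li / D0 li < \<alpha>" using C2 by blast
  then have li: "li \<in> {0..1}" "0 < D0 li" "D1 li / D0 li < \<alpha>" by auto
  have Lfdr_x_nonneg: "0 \<le> Lfdr \<pi>0 f0 f1 i (x i \<omega>)" if "i \<ge> 1" "\<omega> \<in> space M" for i \<omega>
    using \<pi>0[OF that(1)] f0_dens(1)[OF x_range[OF that]] f1_dens(1)[OF x_range[OF that]]
    by (intro Lfdr_nonneg) auto
  have meas: "Dm0 \<pi>0 f0 f1 x m lam \<in> borel_measurable M"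
      "Dm1 \<pi>0 f0 f1 x m lam \<in> borel_measurable M"
      "Vm \<pi>0 f0 f1 \<theta> x m lam \<in> borel_measurable M" for m lam
    using borel_measurable_Dm0[of f0 f1 x M] borel_measurable_Dm1[of f0 f1 x M]
      borel_measurable_Vm[of f0 f1 x M \<theta>] f0_meas f1_meas x_meas \<theta>_meas
    by blast+
  fix \<delta> :: real assume "0 < \<delta>"
  have "\<forall>\<^sub>F m in sequentially. FDRm M \<pi>0 f0 f1 \<theta> x m (lambda_m \<pi>0 f0 f1 x \<alpha> m) \<le> \<alpha> + \<delta>"
    by (rule eventually_FDRm_lambda_m_le[OF P \<alpha>(1) \<open>0 < \<delta>\<close> Lfdr_x_nonneg meas C1_D0 C1_D1 C1_V
          C1_cont(2) li])
  then have "limsup (\<lambda>m. ereal (FDRm M \<pi>0 f0 f1 \<theta> x m (lambda_m \<pi>0 f0 f1 x \<alpha> m))) \<le> ereal (\<alpha> + \<delta>)"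
    by (intro Limsup_bounded) (auto elim: eventually_mono)
  then show "limsup (\<lambda>m. ereal (FDRm M \<pi>0 f0 f1 \<theta> x m (lambda_m \<pi>0 f0 f1 x \<alpha> m))) \<le> ereal \<alpha> + ereal \<delta>"
    by simp
qed

end
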